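(* Let $\Phi$ be an $N\times\mathcal{C}$ complex matrix with no repeated columns which is $\eta$-StRIP-able with $\eta>1/2$, let $\epsilon>0$, and assume $k<\epsilon(\mathcal{C}-1)+1$ and $N=O\left(\left(\frac{k\log\mathcal{C}}{\epsilon^2}\right)^{1/\eta}\right)$; let $\delta:=2\exp\left[-\frac{[\epsilon-(k-1)/(\mathcal{C}-1)]^2N^{\eta}}{8k}\right]$. Let $w$ be a fixed column index of $\Phi$, and let $\kappa=\{\kappa_1,\dots,\kappa_k\}$ be the first $k$ elements of a uniformly random permutation of $\{1,\dots,\mathcal{C}\}\setminus\{w\}$. Then $$\mathbb{E}\left[\left\|\frac{1}{\sqrt N}\Phi_\kappa^{\dagger}\frac{1}{\sqrt N}\varphi_w\right\|^2\right]=\frac{k}{N}\,\frac{\mathcal{C}-N}{\mathcal{C}-1},$$ where the expectation is with respect to the choice of $\kappa$.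
   Context: Columns of $\Phi$ are denoted $\varphi_1,\dots,\varphi_{\mathcal{C}}$, with entries $\varphi_j(x)$, $x=1,\dots,N$. For $0<\eta\le 1$, $\Phi$ is called $\eta$-StRIP-able if: (St1) $\sum_{j=1}^{\mathcal{C}}\varphi_j(x)\overline{\varphi_j(y)}=0$ for $x\neq y$, and $\sum_{j=1}^{\mathcal{C}}\varphi_j(x)=0$ for all $x$; (St2) the columns form a group under pointwise multiplication, whose identity is the all-ones column $\varphi_1$; (St3) for all $j\in\{2,\dots,\mathcal{C}\}$, $\left|\sum_x\varphi_j(x)\right|^2\leq N^{2-\eta}$. For a set $\kappa$ of column indices, $\Phi_\kappa$ is the $N\times|\kappa|$ submatrix of the columns indexed by $\kappa$, and $\Phi_\kappa^\dagger$ its conjugate transpose; $\|\cdot\|$ is the Euclidean norm. *)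

theory Defs
  imports "HOL-Probability.Probability" "HOL-Combinatorics.Multiset_Permutations"
begin

(* An N x C complex matrix is represented by Phi :: nat => nat => complex,
   with entry Phi x j = phi_j(x), rows x in {1..N}, columns j in {1..C}. *)

definition no_repeated_columns :: "nat \<Rightarrow> nat \<Rightarrow> (nat \<Rightarrow> nat \<Rightarrow> complex) \<Rightarrow> bool" where
  "no_repeated_columns N C Phi \<longleftrightarrow>
     (\<forall>i\<in>{1..C}. \<forall>j\<in>{1..C}. i \<noteq> j \<longrightarrow> (\<exists>x\<in>{1..N}. Phi x i \<noteq> Phi x j))"

definition St1 :: "nat \<Rightarrow> nat \<Rightarrow> (nat \<Rightarrow> nat \<Rightarrow> complex) \<Rightarrow> bool" where
  "St1 N C Phi \<longleftrightarrow>
     (\<forall>x\<in>{1..N}. \<forall>y\<in>{1..N}. x \<noteq> y \<longrightarrow> (\<Sum>j=1..C. Phi x j * cnj (Phi y j)) = 0) \<and>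
     (\<forall>x\<in>{1..N}. (\<Sum>j=1..C. Phi x j) = 0)"

(* (St2): the columns form a group under pointwise multiplication whose identity
   is the all-ones column phi_1 (associativity is automatic). *)
definition St2 :: "nat \<Rightarrow> nat \<Rightarrow> (nat \<Rightarrow> nat \<Rightarrow> complex) \<Rightarrow> bool" where
  "St2 N C Phi \<longleftrightarrow>
     1 \<le> C \<and>
     (\<forall>x\<in>{1..N}. Phi x 1 = 1) \<and>
     (\<forall>i\<in>{1..C}. \<forall>j\<in>{1..C}. \<exists>l\<in>{1..C}. \<forall>x\<in>{1..N}. Phi x i * Phi x j = Phi x l) \<and>
     (\<forall>i\<in>{1..C}. \<exists>l\<in>{1..C}. \<forall>x\<in>{1..N}. Phi x i * Phi x l = 1)"

definition St3 :: "real \<Rightarrow> nat \<Rightarrow> nat \<Rightarrow> (nat \<Rightarrow> nat \<Rightarrow> complex) \<Rightarrow> bool" where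
  "St3 \<eta> N C Phi \<longleftrightarrow>
     (\<forall>j\<in>{2..C}. (cmod (\<Sum>x=1..N. Phi x j))\<^sup>2 \<le> real N powr (2 - \<eta>))"

definition StRIP_able :: "real \<Rightarrow> nat \<Rightarrow> nat \<Rightarrow> (nat \<Rightarrow> nat \<Rightarrow> complex) \<Rightarrow> bool" where
  "StRIP_able \<eta> N C Phi \<longleftrightarrow> 0 < \<eta> \<and> \<eta> \<le> 1 \<and> St1 N C Phi \<and> St2 N C Phi \<and> St3 \<eta> N C Phi"

(* || (1/sqrt N) Phi_kappa^dagger (1/sqrt N) phi_w ||^2, where kappa is given as the
   list [kappa_1,...,kappa_k]; the i-th entry of Phi_kappa^dagger phi_w is
   sum_x conj(phi_{kappa_i}(x)) phi_w(x). *)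
definition sub_gram_norm_sq :: "nat \<Rightarrow> (nat \<Rightarrow> nat \<Rightarrow> complex) \<Rightarrow> nat list \<Rightarrow> nat \<Rightarrow> real" where
  "sub_gram_norm_sq N Phi \<kappa> w =
     (\<Sum>i<length \<kappa>. (cmod ((1 / sqrt (real N)) * (1 / sqrt (real N)) *
         (\<Sum>x=1..N. cnj (Phi x (\<kappa> ! i)) * Phi x w)))\<^sup>2)"

end

theory Submission
  imports Defs
begin

text \<open>
  Every entry of an StRIP-able matrix lies in a finite multiplicative group of complex
  numbers, so it has modulus one. Hence the rows of \<open>\<Phi>\<close> are orthogonal with squared
  norm \<open>\<C>\<close>, which gives \<open>\<Sum>\<^sub>j |\<langle>\<phi>\<^sub>j, \<phi>\<^sub>w\<rangle>|\<^sup>2 = \<C> N\<close>, while the term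
  \<open>j = w\<close> alone contributes \<open>N\<^sup>2\<close>. Each of the \<open>k\<close> entries of a uniformly random
  arrangement of the remaining \<open>\<C> - 1\<close> columns is itself uniformly distributed, so by
  linearity the expectation is \<open>k (\<C> N - N\<^sup>2) / (N\<^sup>2 (\<C> - 1))\<close>.
\<close>

lemma norm_eq_1_if_finite_powers:
  fixes a :: "'a :: real_normed_div_algebra"
  assumes "a \<noteq> 0" and "finite (range (\<lambda>n::nat. a ^ n))"
  shows "norm a = 1"
proof -
  obtain m n :: nat where "m < n" and "a ^ m = a ^ n"
    using assms(2) by (metis finite_imageD linorder_neqE_nat inj_on_def infinite_UNIV_nat)
  then have "a ^ m * a ^ (n - m) = a ^ m * 1"
    by (metis le_add_diff_inverse less_imp_le mult.right_neutral power_add)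
  then have "a ^ (n - m) = 1"
    using assms(1) by simp
  then show ?thesis
    using \<open>m < n\<close> power_eq_1_iff by fastforce
qed

lemma St2_norm_entry:
  assumes "St2 N C Phi" and "x \<in> {1..N}" and "j \<in> {1..C}"
  shows "cmod (Phi x j) = 1"
proof (rule norm_eq_1_if_finite_powers)
  show "Phi x j \<noteq> 0"
    using assms unfolding St2_def by force
  have "Phi x j ^ n \<in> (\<lambda>l. Phi x l) ` {1..C}" for n
  proof (induction n)
    case 0
    then show ?case using assms unfolding St2_def by force
  next
    case (Suc n)
    then obtain l where "l \<in> {1..C}" "Phi x j ^ n = Phi x l" by auto
    moreover obtain l' where "l' \<in> {1..C}" "Phi x j * Phi x l = Phi x l'"
      using assms \<open>l \<in> {1..C}\<close> unfolding St2_def by blast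
    ultimately show ?case by auto
  qed
  then show "finite (range (\<lambda>n::nat. Phi x j ^ n))"
    by (meson finite_imageI finite_atLeastAtMost finite_subset image_subsetI)
qed

lemma St1_St2_rows_orthogonal:
  assumes "St1 N C Phi" and "St2 N C Phi" and "x \<in> {1..N}" and "y \<in> {1..N}"
  shows "(\<Sum>j=1..C. Phi y j * cnj (Phi x j)) = (if x = y then of_real (real C) else 0)"
proof (cases "x = y")
  case True
  have "Phi x j * cnj (Phi x j) = 1" if "j \<in> {1..C}" for j
    using complex_norm_square[of "Phi x j"] St2_norm_entry[OF assms(2,3) that] by simp
  then show ?thesis using True by simp
next
  case False
  then show ?thesis using assms unfolding St1_def by auto
qed

lemma sum_cmod_adjoint_sq_orthogonal_rows:
  fixes Phi :: "'r \<Rightarrow> 'c \<Rightarrow> complex" and v :: "'r \<Rightarrow> complex"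
  assumes "finite X" and "finite J"
    and "\<And>x y. x \<in> X \<Longrightarrow> y \<in> X \<Longrightarrow>
           (\<Sum>j\<in>J. Phi y j * cnj (Phi x j)) = (if x = y then of_real c else 0)"
  shows "(\<Sum>j\<in>J. (cmod (\<Sum>x\<in>X. cnj (Phi x j) * v x))\<^sup>2) = c * (\<Sum>x\<in>X. (cmod (v x))\<^sup>2)"
proof -
  have "of_real (\<Sum>j\<in>J. (cmod (\<Sum>x\<in>X. cnj (Phi x j) * v x))\<^sup>2)
      = (\<Sum>j\<in>J. (\<Sum>x\<in>X. cnj (Phi x j) * v x) * cnj (\<Sum>y\<in>X. cnj (Phi y j) * v y))"
    unfolding of_real_sum complex_norm_square ..
  also have "\<dots> = (\<Sum>j\<in>J. \<Sum>x\<in>X. \<Sum>y\<in>X. v x * cnj (v y) * (Phi y j * cnj (Phi x j)))"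
    unfolding cnj_sum sum_product by (simp add: mult_ac)
  also have "\<dots> = (\<Sum>x\<in>X. \<Sum>y\<in>X. v x * cnj (v y) * (\<Sum>j\<in>J. Phi y j * cnj (Phi x j)))"
    by (simp add: sum.swap[of _ J] sum_distrib_left)
  also have "\<dots> = (\<Sum>x\<in>X. \<Sum>y\<in>X. if x = y then of_real c * (v x * cnj (v y)) else 0)"
    by (intro sum.cong refl) (simp add: assms(3))
  also have "\<dots> = (\<Sum>x\<in>X. of_real c * (v x * cnj (v x)))"
    using assms(1) by simp
  also have "\<dots> = of_real (c * (\<Sum>x\<in>X. (cmod (v x))\<^sup>2))"
    by (simp add: sum_distrib_left flip: complex_norm_square)
  finally show ?thesis
    using of_real_eq_iff by blast
qed

lemma map_pmf_permutations_of_set_permutes: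
  assumes "finite A" and "\<pi> permutes A"
  shows "map_pmf (map \<pi>) (pmf_of_set (permutations_of_set A)) = pmf_of_set (permutations_of_set A)"
proof -
  have "inj_on (map \<pi>) (permutations_of_set A)"
    using permutes_inj[OF assms(2)] by (meson inj_mapI inj_on_subset subset_UNIV)
  then show ?thesis
    using assms by (simp add: map_pmf_of_set_inj permutations_of_set_image_permutes)
qed

text \<open>
  The law of the \<open>i\<close>-th entry is invariant under every transposition of \<open>A\<close>,
  hence uniform.
\<close>

lemma map_pmf_nth_permutations_of_set:
  assumes "finite A" and "i < card A"
  shows "map_pmf (\<lambda>\<sigma>. \<sigma> ! i) (pmf_of_set (permutations_of_set A)) = pmf_of_set A"
proof -
  define p where "p = pmf_of_set (permutations_of_set A)"
  define q where "q = map_pmf (\<lambda>\<sigma>. \<sigma> ! i) p"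
  have set_p: "set_pmf p = permutations_of_set A"
    using assms(1) unfolding p_def by (simp add: set_pmf_of_set)
  have length_p: "length \<sigma> = card A" if "\<sigma> \<in> set_pmf p" for \<sigma>
    using that set_p by (auto simp: permutations_of_set_def distinct_card)
  have set_q: "set_pmf q \<subseteq> A"
    using assms(2) length_p set_p unfolding q_def by (auto simp: permutations_of_set_def)
  have pmf_q_eq: "pmf q a = pmf q b" if "a \<in> A" "b \<in> A" for a b
  proof -
    define t where "t = Transposition.transpose a b"
    have "map_pmf t q = map_pmf (\<lambda>\<sigma>. \<sigma> ! i) (map_pmf (map t) p)"
      unfolding q_def map_pmf_comp using assms(2) length_p
      by (intro map_pmf_cong) auto
    also have "\<dots> = q"
      unfolding p_def q_def t_def
      by (simp add: map_pmf_permutations_of_set_permutes assms(1) permutes_swap_id that)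
    finally have "pmf q (t b) = pmf q b"
      by (metis pmf_map_inj' inj_transpose t_def)
    then show ?thesis by (simp add: t_def)
  qed
  have "A \<noteq> {}" using assms(2) by auto
  then obtain a0 where "a0 \<in> A" by blast
  have "card A * pmf q a0 = 1"
    using sum_pmf_eq_1[OF assms(1) set_q] pmf_q_eq[OF _ \<open>a0 \<in> A\<close>] by simp
  then have "pmf q a = pmf (pmf_of_set A) a" for a
    using pmf_q_eq[OF _ \<open>a0 \<in> A\<close>, of a] set_q assms(1) \<open>A \<noteq> {}\<close>
    by (cases "a \<in> A") (auto simp: pmf_eq_0_set_pmf field_simps)
  then show ?thesis
    unfolding q_def p_def by (rule pmf_eqI)
qed

lemma expectation_sum_list_take_permutation:
  fixes f :: "'a \<Rightarrow> real"
  assumes "finite A" and "k \<le> card A"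
  shows "measure_pmf.expectation (pmf_of_set (permutations_of_set A)) (\<lambda>\<sigma>. sum_list (map f (take k \<sigma>)))
       = real k * (\<Sum>a\<in>A. f a) / real (card A)"
proof -
  define p where "p = pmf_of_set (permutations_of_set A)"
  have set_p: "set_pmf p = permutations_of_set A"
    using assms(1) unfolding p_def by (simp add: set_pmf_of_set)
  have integrable: "integrable p g" for g :: "'a list \<Rightarrow> real"
    using assms(1) set_p by (simp add: integrable_measure_pmf_finite)
  have "sum_list (map f (take k \<sigma>)) = (\<Sum>i<k. f (\<sigma> ! i))" if "\<sigma> \<in> set_pmf p" for \<sigma>
  proof -
    have "length \<sigma> = card A"
      using that set_p by (auto simp: permutations_of_set_def distinct_card)
    then show ?thesis
      using assms(2) by (simp add: sum_list_sum_nth atLeast0LessThan)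
  qed
  then have "measure_pmf.expectation p (\<lambda>\<sigma>. sum_list (map f (take k \<sigma>)))
      = measure_pmf.expectation p (\<lambda>\<sigma>. \<Sum>i<k. f (\<sigma> ! i))"
    by (intro integral_cong_AE) (simp_all add: AE_measure_pmf_iff)
  also have "\<dots> = (\<Sum>i<k. measure_pmf.expectation p (\<lambda>\<sigma>. f (\<sigma> ! i)))"
    by (simp add: integrable)
  also have "\<dots> = (\<Sum>i<k. measure_pmf.expectation (pmf_of_set A) f)"
  proof (intro sum.cong refl)
    fix i assume "i \<in> {..<k}"
    then have "map_pmf (\<lambda>\<sigma>. \<sigma> ! i) p = pmf_of_set A"
      unfolding p_def using assms by (intro map_pmf_nth_permutations_of_set) auto
    then show "measure_pmf.expectation p (\<lambda>\<sigma>. f (\<sigma> ! i)) = measure_pmf.expectation (pmf_of_set A) f"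
      by (metis integral_map_pmf)
  qed
  also have "\<dots> = real k * (\<Sum>a\<in>A. f a) / real (card A)"
    using assms by (cases "A = {}") (auto simp: integral_pmf_of_set)
  finally show ?thesis
    unfolding p_def .
qed

lemma sub_gram_norm_sq_eq_sum_list:
  "sub_gram_norm_sq N Phi \<kappa> w
     = (\<Sum>j\<leftarrow>\<kappa>. (cmod (\<Sum>x=1..N. cnj (Phi x j) * Phi x w))\<^sup>2 / (real N)\<^sup>2)"
  by (simp add: sub_gram_norm_sq_def sum_list_sum_nth atLeast0LessThan norm_mult norm_divide
      power_mult_distrib power_divide)

theorem lemma3p10:
  fixes N C k w :: nat and Phi :: "nat \<Rightarrow> nat \<Rightarrow> complex" and \<eta> \<epsilon> \<delta> :: real
  assumes "1 \<le> N" and "2 \<le> C"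
    and "no_repeated_columns N C Phi"
    and "StRIP_able \<eta> N C Phi" and "\<eta> > 1/2"
    and "\<epsilon> > 0"
    and "real k < \<epsilon> * (real C - 1) + 1"
    and "k \<le> C - 1"
    and "\<delta> = 2 * exp (- ((\<epsilon> - (real k - 1) / (real C - 1))\<^sup>2 * real N powr \<eta>) / (8 * real k))"
    and "w \<in> {1..C}"
  shows "measure_pmf.expectation (pmf_of_set (permutations_of_set ({1..C} - {w})))
           (\<lambda>\<sigma>. sub_gram_norm_sq N Phi (take k \<sigma>) w)
         = real k / real N * ((real C - real N) / (real C - 1))"
proof -
  \<comment> \<open>Only (St1), (St2), \<open>w \<in> {1..C}\<close> and \<open>k \<le> C - 1\<close> are needed; the remaining
    hypotheses concern the accompanying tail bound \<open>\<delta>\<close> of the paper.\<close>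
  have St1: "St1 N C Phi" and St2: "St2 N C Phi"
    using assms(4) unfolding StRIP_able_def by auto
  define g where "g j = (cmod (\<Sum>x=1..N. cnj (Phi x j) * Phi x w))\<^sup>2" for j
  have unit: "cnj (Phi x w) * Phi x w = 1" if "x \<in> {1..N}" for x
    using complex_norm_square[of "Phi x w"] St2_norm_entry[OF St2 that assms(10)]
    by (simp add: mult.commute)
  have "(\<Sum>j=1..C. g j) = real C * (\<Sum>x=1..N. (cmod (Phi x w))\<^sup>2)"
    unfolding g_def
    by (rule sum_cmod_adjoint_sq_orthogonal_rows[OF _ _ St1_St2_rows_orthogonal[OF St1 St2]]) simp_all
  also have "\<dots> = real C * real N"
    using St2_norm_entry[OF St2 _ assms(10)] by simp
  finally have sum_g: "(\<Sum>j=1..C. g j) = real C * real N" .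
  have g_w: "g w = (real N)\<^sup>2"
    unfolding g_def using unit by simp
  have "(\<Sum>j\<in>{1..C} - {w}. g j / (real N)\<^sup>2) = (real C - real N) / real N"
    using sum_g g_w assms(1,10)
    by (simp add: sum_diff1 flip: sum_divide_distrib) (simp add: field_simps power2_eq_square)
  moreover have "card ({1..C} - {w}) = C - 1"
    using assms(10) by simp
  ultimately show ?thesis
    using assms(2,8) expectation_sum_list_take_permutation[of "{1..C} - {w}" k "\<lambda>j. g j / (real N)\<^sup>2"]
    by (simp add: sub_gram_norm_sq_eq_sum_list g_def of_nat_diff)
qed

end
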